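(* Let $a,b,d>0$, $c\geq c^*=-\sqrt{3bd}$, $\phi(x)=\frac{ax^3+bx^2+cx+d}{x^3}$ ($x>0$), let $\overline{t}$ be the unique equilibrium of $\phi$, and let $\{t_n\}_{n\ge0}$ be a positive solution of $t_{n+1}=\phi(t_n)$. Let $$G(x)=a^3x^6+(2a^2b-ac-d)x^5+(ab^2-ad-bc+2a^2c)x^4+(2a^2d+2abc-c^2-bd)x^3+(ac^2+2abd-2cd)x^2+(2acd-d^2)x+ad^2$$ and suppose that $G$ has no root of even multiplicity. Then: \begin{description} \item[(a)] If $\phi$ has no 2-cycle, then $\{t_n\}$ converges to $\overline{t}$. \item[(b)] If $\phi$ has one 2-cycle $(p,q)$ with $p<\overline{t}<q$, then $\{t_n\}$ converges to the 2-cycle $(p,q)$ if $t_0\neq\overline{t}$; otherwise $\{t_n\}$ converges to $\overline{t}$. \item[(c)] If $\phi$ has two 2-cycles $(p_1,q_1)$, $(p_2,q_2)$ with $p_1<p_2<\overline{t}<q_2<q_1$, then $\{t_n\}$ converges to $\overline{t}$ if $t_0\in(p_2,q_2)$, converges to the 2-cycle $(p_2,q_2)$ if $t_0\in\{p_2,q_2\}$, and otherwise converges to the 2-cycle $(p_1,q_1)$. \item[(d)] If $\phi$ has three 2-cycles $(p_1,q_1)$, $(p_2,q_2)$, $(p_3,q_3)$ with $p_1<p_2<p_3<\overline{t}<q_3<q_2<q_1$, then $\{t_n\}$ converges to the 2-cycle $(p_3,q_3)$ if $t_0\in(p_2,q_2)\setminus\{\overline{t}\}$, converges to $\overline{t}$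 if $t_0=\overline{t}$, converges to the 2-cycle $(p_2,q_2)$ if $t_0\in\{p_2,q_2\}$, and otherwise converges to the 2-cycle $(p_1,q_1)$. \end{description}
   Context: An equilibrium is $t>0$ with $\phi(t)=t$. A 2-cycle is a pair $(p,q)$ of positive numbers with $p\ne q$, $\phi(p)=q$, $\phi(q)=p$. A positive solution is a sequence with $t_0>0$ and $t_{n+1}=\phi(t_n)$. The sequence $\{t_n\}$ converges to the 2-cycle $(p,q)$ if one of the subsequences $\{t_{2n}\}$, $\{t_{2n+1}\}$ converges to $p$ and the other to $q$. *)

theory Defs
  imports Complex_Main "HOL-Computational_Algebra.Polynomial"
begin

definition phi :: "real \<Rightarrow> real \<Rightarrow> real \<Rightarrow> real \<Rightarrow> real \<Rightarrow> real" where
  "phi a b c d x = (a * x ^ 3 + b * x ^ 2 + c * x + d) / x ^ 3"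

definition is_equilibrium :: "(real \<Rightarrow> real) \<Rightarrow> real \<Rightarrow> bool" where
  "is_equilibrium f t \<longleftrightarrow> t > 0 \<and> f t = t"

definition is_two_cycle :: "(real \<Rightarrow> real) \<Rightarrow> real \<Rightarrow> real \<Rightarrow> bool" where
  "is_two_cycle f p q \<longleftrightarrow> p > 0 \<and> q > 0 \<and> p \<noteq> q \<and> f p = q \<and> f q = p"

definition two_cycles :: "(real \<Rightarrow> real) \<Rightarrow> (real \<times> real) set" where
  "two_cycles f = {(p, q). p < q \<and> is_two_cycle f p q}"

definition is_solution :: "(real \<Rightarrow> real) \<Rightarrow> (nat \<Rightarrow> real) \<Rightarrow> bool" where
  "is_solution f t \<longleftrightarrow> t 0 > 0 \<and> (\<forall>n. t (Suc n) = f (t n))"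

definition converges_to_cycle :: "(nat \<Rightarrow> real) \<Rightarrow> real \<Rightarrow> real \<Rightarrow> bool" where
  "converges_to_cycle t p q \<longleftrightarrow>
     ((\<lambda>n. t (2 * n)) \<longlonglongrightarrow> p \<and> (\<lambda>n. t (2 * n + 1)) \<longlonglongrightarrow> q) \<or>
     ((\<lambda>n. t (2 * n)) \<longlonglongrightarrow> q \<and> (\<lambda>n. t (2 * n + 1)) \<longlonglongrightarrow> p)"

definition G_poly :: "real \<Rightarrow> real \<Rightarrow> real \<Rightarrow> real \<Rightarrow> real poly" where
  "G_poly a b c d =
     [: a * d ^ 2,
        2 * a * c * d - d ^ 2,
        a * c ^ 2 + 2 * a * b * d - 2 * c * d,
        2 * a ^ 2 * d + 2 * a * b * c - c ^ 2 - b * d,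
        a * b ^ 2 - a * d - b * c + 2 * a ^ 2 * c,
        2 * a ^ 2 * b - a * c - d,
        a ^ 3 :]"

end

theory Submission
  imports Defs
begin

text \<open>
  Because \<open>\<phi>\<close> is decreasing on the positive reals, \<open>\<psi> = \<phi> \<circ> \<phi>\<close> is increasing, so the even
  subsequence of a solution is a monotone iteration of \<open>\<psi>\<close>; it converges to a fixed point
  of \<open>\<psi>\<close>, i.e. to the equilibrium or to a point of a 2-cycle, and the odd subsequence
  follows by continuity of \<open>\<phi>\<close>. Which fixed point is reached is decided by the sign of
  \<open>\<psi> x - x\<close>: it is positive near 0 (as \<open>\<phi> > a\<close>), negative near infinity (as
  \<open>\<psi> \<le> \<phi> a\<close>), constant between consecutive fixed points of \<open>\<psi>\<close>, and it changes at
  every 2-cycle point, because \<open>\<psi> x - x = - (x\<^sup>4 - N x) G x / (N x)\<^sup>3\<close> with \<open>N\<close> the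
  numerator of \<open>\<phi>\<close>, and \<open>G\<close> has only roots of odd multiplicity. Reading these signs
  off from both ends towards the equilibrium shows which fixed points attract.
\<close>

lemma funpow_limit_fixed_point:
  fixes g :: "'a::t2_space \<Rightarrow> 'a"
  assumes "continuous_on S g" "(\<lambda>n. (g ^^ n) x) \<longlonglongrightarrow> L" "L \<in> S" "\<forall>n. (g ^^ n) x \<in> S"
  shows "g L = L"
proof -
  have "(\<lambda>n. g ((g ^^ n) x)) \<longlonglongrightarrow> g L"
    using continuous_on_tendsto_compose[OF assms(1-3)] assms(4) by simp
  moreover have "(\<lambda>n. g ((g ^^ n) x)) \<longlonglongrightarrow> L"
    using LIMSEQ_Suc[OF assms(2)] by simp
  ultimately show ?thesis
    using LIMSEQ_unique by blast
qed

lemma funpow_tendsto_fixed_point_from_above: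
  fixes g :: "real \<Rightarrow> real"
  assumes mono: "mono_on {u..x} g" and cont: "continuous_on {u..x} g"
    and fixed: "g u = u" and "u \<le> x" and below: "\<forall>y\<in>{u<..x}. g y < y"
  shows "(\<lambda>n. (g ^^ n) x) \<longlonglongrightarrow> u"
proof -
  define s where "s n = (g ^^ n) x" for n
  have step: "u \<le> g y \<and> g y \<le> y" if "y \<in> {u..x}" for y
  proof (cases "y = u")
    case False
    with that have "g y < y"
      using below by auto
    moreover have "g u \<le> g y"
      using mono_onD[OF mono, of u y] that \<open>u \<le> x\<close> by auto
    ultimately show ?thesis
      using fixed by simp
  qed (simp add: fixed)
  have s_in: "s n \<in> {u..x}" for n
  proof (induction n)
    case (Suc n)
    then show ?case
      using step[of "s n"] by (auto simp: s_def)
  qed (simp add: s_def \<open>u \<le> x\<close>)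
  have "decseq s"
    using step s_in by (intro decseq_SucI) (simp add: s_def)
  then obtain L where L: "s \<longlonglongrightarrow> L" "\<forall>n. L \<le> s n"
    using decseq_convergent[of s u] s_in by auto
  have "u \<le> L"
    using L(1) s_in by (intro LIMSEQ_le_const) auto
  moreover have "L \<le> x"
    using L(2) s_def by (metis funpow_0)
  ultimately have "g L = L"
    using funpow_limit_fixed_point[OF cont, of x L] L(1) s_in unfolding s_def
    by (simp add: fun_eq_iff)
  have "L = u"
  proof (rule ccontr)
    assume "L \<noteq> u"
    with \<open>u \<le> L\<close> \<open>L \<le> x\<close> below have "g L < L"
      by auto
    with \<open>g L = L\<close> show False
      by simp
  qed
  with L(1) show ?thesis
    unfolding s_def by simp
qed

lemma funpow_tendsto_fixed_point_from_below:
  fixes g :: "real \<Rightarrow> real"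
  assumes mono: "mono_on {x..u} g" and cont: "continuous_on {x..u} g"
    and fixed: "g u = u" and "x \<le> u" and above: "\<forall>y\<in>{x..<u}. y < g y"
  shows "(\<lambda>n. (g ^^ n) x) \<longlonglongrightarrow> u"
proof -
  define h where "h y = - g (- y)" for y
  have funpow_h: "(h ^^ n) y = - (g ^^ n) (- y)" for n y
    by (induction n) (simp_all add: h_def)
  have "mono_on {-u..-x} h"
    using mono by (auto simp: mono_on_def h_def)
  moreover have "continuous_on {-u..-x} h"
    unfolding h_def by (intro continuous_intros continuous_on_compose2[OF cont]) auto
  moreover have "\<forall>y\<in>{-u<..-x}. h y < y"
  proof
    fix y :: real assume "y \<in> {-u<..-x}"
    then have "-y \<in> {x..<u}" by auto
    with above show "h y < y" unfolding h_def by force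
  qed
  ultimately have "(\<lambda>n. (h ^^ n) (-x)) \<longlonglongrightarrow> -u"
    using fixed \<open>x \<le> u\<close> by (intro funpow_tendsto_fixed_point_from_above) (auto simp: h_def)
  from tendsto_minus[OF this] show ?thesis
    by (simp add: funpow_h)
qed

definition positive_on :: "(real \<Rightarrow> real) \<Rightarrow> real set \<Rightarrow> bool" where
  "positive_on F S \<longleftrightarrow> (\<forall>x\<in>S. 0 < F x)"

definition negative_on :: "(real \<Rightarrow> real) \<Rightarrow> real set \<Rightarrow> bool" where
  "negative_on F S \<longleftrightarrow> (\<forall>x\<in>S. F x < 0)"

lemma negative_on_subset: "negative_on F T \<Longrightarrow> S \<subseteq> T \<Longrightarrow> negative_on F S"
  unfolding negative_on_def by blast

lemma funpow_tendsto_attracting_fixed_point: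
  fixes g :: "real \<Rightarrow> real"
  assumes mono: "mono_on {v<..<w} g" and cont: "continuous_on {v<..<w} g"
    and fixed: "g u = u" and u: "u \<in> {v<..<w}"
    and above: "positive_on (\<lambda>y. g y - y) {v<..<u}" and below: "negative_on (\<lambda>y. g y - y) {u<..<w}"
    and x: "x \<in> {v<..<w}"
  shows "(\<lambda>n. (g ^^ n) x) \<longlonglongrightarrow> u"
proof (cases "x \<le> u")
  case True
  then have sub: "{x..u} \<subseteq> {v<..<w}"
    using u x by auto
  have "\<forall>y\<in>{x..<u}. y < g y"
    using above x unfolding positive_on_def by auto
  then show ?thesis
    by (rule funpow_tendsto_fixed_point_from_below[OF mono_on_subset[OF mono sub]
          continuous_on_subset[OF cont sub] fixed True])
next
  case False
  then have sub: "{u..x} \<subseteq> {v<..<w}"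
    using u x by auto
  have "\<forall>y\<in>{u<..x}. g y < y"
    using below x unfolding negative_on_def by auto
  then show ?thesis
    using False by (intro funpow_tendsto_fixed_point_from_above[OF mono_on_subset[OF mono sub]
          continuous_on_subset[OF cont sub] fixed]) auto
qed

lemma positive_on_connected:
  fixes F :: "real \<Rightarrow> real"
  assumes conn: "connected S" and cont: "continuous_on S F" and nonzero: "\<forall>y\<in>S. F y \<noteq> 0"
    and "x \<in> S" "0 < F x"
  shows "positive_on F S"
  unfolding positive_on_def
proof
  fix y assume y: "y \<in> S"
  have image_conn: "connected (F ` S)"
    using connected_continuous_image[OF cont conn] .
  show "0 < F y"
  proof (rule ccontr)
    assume "\<not> 0 < F y"
    then have "0 \<in> F ` S"
      using connectedD_interval[OF image_conn, of "F y" "F x" 0] y assms(4,5) by auto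
    with nonzero show False
      by auto
  qed
qed

lemma negative_on_connected:
  fixes F :: "real \<Rightarrow> real"
  assumes "connected S" "continuous_on S F" "\<forall>y\<in>S. F y \<noteq> 0" "x \<in> S" "F x < 0"
  shows "negative_on F S"
  using positive_on_connected[of S "\<lambda>y. - F y" x] assms
  by (auto simp: positive_on_def negative_on_def intro: continuous_on_minus)

definition sign_changes_at :: "(real \<Rightarrow> real) \<Rightarrow> real \<Rightarrow> bool" where
  "sign_changes_at F r \<longleftrightarrow>
     (eventually (\<lambda>x. F x < 0) (at_left r) \<and> eventually (\<lambda>x. 0 < F x) (at_right r)) \<or>
     (eventually (\<lambda>x. 0 < F x) (at_left r) \<and> eventually (\<lambda>x. F x < 0) (at_right r))"

lemma eventually_at_left_real_witness:
  fixes r :: real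
  assumes "eventually P (at_left r)" "l < r"
  shows "\<exists>x\<in>{l<..<r}. P x"
proof -
  have "eventually (\<lambda>x. P x \<and> x \<in> {l<..<r}) (at_left r)"
    using assms eventually_at_left_real eventually_conj by blast
  then show ?thesis
    using eventually_happens'[OF trivial_limit_at_left_real] by blast
qed

lemma eventually_at_right_real_witness:
  fixes r :: real
  assumes "eventually P (at_right r)" "r < m"
  shows "\<exists>x\<in>{r<..<m}. P x"
proof -
  have "eventually (\<lambda>x. P x \<and> x \<in> {r<..<m}) (at_right r)"
    using assms eventually_at_right_real eventually_conj by blast
  then show ?thesis
    using eventually_happens'[OF trivial_limit_at_right_real] by blast
qed

lemma sign_changes_at_flip:
  fixes F :: "real \<Rightarrow> real"
  assumes change: "sign_changes_at F r" and "l < r" "r < m"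
    and cont: "continuous_on ({l<..<r} \<union> {r<..<m}) F"
    and nonzero: "\<forall>x\<in>{l<..<r} \<union> {r<..<m}. F x \<noteq> 0"
  shows "(positive_on F {l<..<r} \<longleftrightarrow> negative_on F {r<..<m}) \<and>
         (negative_on F {l<..<r} \<longleftrightarrow> positive_on F {r<..<m})"
proof -
  have left: "connected {l<..<r}" "continuous_on {l<..<r} F" "\<forall>x\<in>{l<..<r}. F x \<noteq> 0"
    using cont nonzero by (auto intro: continuous_on_subset)
  have right: "connected {r<..<m}" "continuous_on {r<..<m} F" "\<forall>x\<in>{r<..<m}. F x \<noteq> 0"
    using cont nonzero by (auto intro: continuous_on_subset)
  from change consider
      (neg_pos) x y where "x \<in> {l<..<r}" "y \<in> {r<..<m}" "F x < 0" "0 < F y"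
    | (pos_neg) x y where "x \<in> {l<..<r}" "y \<in> {r<..<m}" "0 < F x" "F y < 0"
    unfolding sign_changes_at_def
    using eventually_at_left_real_witness[OF _ \<open>l < r\<close>]
      eventually_at_right_real_witness[OF _ \<open>r < m\<close>] by metis
  then show ?thesis
  proof cases
    case neg_pos
    then have "negative_on F {l<..<r}" "positive_on F {r<..<m}"
      using negative_on_connected[OF left] positive_on_connected[OF right] by blast+
    moreover have "\<not> positive_on F {l<..<r}" "\<not> negative_on F {r<..<m}"
      unfolding positive_on_def negative_on_def using neg_pos by (meson less_asym)+
    ultimately show ?thesis
      by blast
  next
    case pos_neg
    then have "positive_on F {l<..<r}" "negative_on F {r<..<m}"
      using positive_on_connected[OF left] negative_on_connected[OF right] by blast+
    moreover have "\<not> negative_on F {l<..<r}" "\<not> positive_on F {r<..<m}"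
      unfolding positive_on_def negative_on_def using pos_neg by (meson less_asym)+
    ultimately show ?thesis
      by blast
  qed
qed

lemma sign_changes_at_cong:
  assumes "eventually (\<lambda>x. F x = G x) (at r)" "sign_changes_at G r"
  shows "sign_changes_at F r"
proof -
  have eq_left: "eventually (\<lambda>x. F x = G x) (at_left r)"
    and eq_right: "eventually (\<lambda>x. F x = G x) (at_right r)"
    using assms(1) eventually_at_split by blast+
  have left: "eventually (\<lambda>x. P (F x)) (at_left r)" if "eventually (\<lambda>x. P (G x)) (at_left r)" for P
    using eq_left that by eventually_elim auto
  have right: "eventually (\<lambda>x. P (F x)) (at_right r)" if "eventually (\<lambda>x. P (G x)) (at_right r)" for P
    using eq_right that by eventually_elim auto
  show ?thesis
    using assms(2) left[of "\<lambda>y. y < 0"] left[of "\<lambda>y. 0 < y"]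
      right[of "\<lambda>y. y < 0"] right[of "\<lambda>y. 0 < y"]
    unfolding sign_changes_at_def by blast
qed

lemma sign_changes_at_odd_power:
  fixes H :: "real \<Rightarrow> real"
  assumes "odd k" "isCont H r" "H r \<noteq> 0"
  shows "sign_changes_at (\<lambda>x. (x - r) ^ k * H x) r"
proof -
  have "((\<lambda>x. H x * H r) \<longlongrightarrow> H r * H r) (at r)"
    using assms(2) by (intro tendsto_intros) (simp add: isCont_def)
  then have "eventually (\<lambda>x. 0 < H x * H r) (at r)"
    by (rule order_tendstoD(1)) (use assms(3) in \<open>simp add: not_square_less_zero less_le\<close>)
  then have "eventually (\<lambda>x. 0 < H x * H r) (at_left r)"
    and "eventually (\<lambda>x. 0 < H x * H r) (at_right r)"
    using eventually_at_split by blast+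
  then have same_sign_left: "eventually (\<lambda>x. 0 < H x * H r \<and> x < r) (at_left r)"
    and same_sign_right: "eventually (\<lambda>x. 0 < H x * H r \<and> r < x) (at_right r)"
    using eventually_at_left_real[of "r - 1" r] eventually_at_right_real[of r "r + 1"]
    by (auto elim: eventually_elim2)
  have left: "eventually (\<lambda>x. (x - r) ^ k * H x * H r < 0) (at_left r)"
    using same_sign_left
  proof (rule eventually_mono)
    fix x assume "0 < H x * H r \<and> x < r"
    moreover from this have "(x - r) ^ k < 0"
      using assms(1) by simp
    ultimately show "(x - r) ^ k * H x * H r < 0"
      by (metis mult.assoc mult_neg_pos)
  qed
  have right: "eventually (\<lambda>x. 0 < (x - r) ^ k * H x * H r) (at_right r)"
    using same_sign_right
  proof (rule eventually_mono)
    fix x assume "0 < H x * H r \<and> r < x"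
    then show "0 < (x - r) ^ k * H x * H r"
      by (metis mult.assoc mult_pos_pos diff_gt_0_iff_gt zero_less_power)
  qed
  show ?thesis
  proof (cases "0 < H r")
    case True
    then show ?thesis
      using left right unfolding sign_changes_at_def
      by (auto elim!: eventually_mono simp: mult_less_0_iff zero_less_mult_iff)
  next
    case False
    then show ?thesis
      using left right assms(3) unfolding sign_changes_at_def
      by (auto elim!: eventually_mono simp: mult_less_0_iff zero_less_mult_iff)
  qed
qed

lemma sign_changes_at_odd_order_root:
  fixes P :: "real poly"
  assumes "P \<noteq> 0" "odd (order r P)" "isCont h r" "h r \<noteq> 0"
  shows "sign_changes_at (\<lambda>x. poly P x * h x) r"
proof -
  define k where "k = order r P"
  obtain R where R: "P = [:-r, 1:] ^ k * R" "\<not> [:-r, 1:] dvd R"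
    using order_decomp[OF assms(1)] unfolding k_def by blast
  have "poly R r \<noteq> 0"
    using R(2) by (simp add: poly_eq_0_iff_dvd)
  then have "sign_changes_at (\<lambda>x. (x - r) ^ k * (poly R x * h x)) r"
    using assms(2-4) unfolding k_def[symmetric]
    by (intro sign_changes_at_odd_power continuous_intros) auto
  moreover have "(\<lambda>x. poly P x * h x) = (\<lambda>x. (x - r) ^ k * (poly R x * h x))"
    by (simp add: fun_eq_iff R(1) poly_power)
  ultimately show ?thesis
    by simp
qed

lemma LIMSEQ_even_odd:
  fixes X :: "nat \<Rightarrow> real"
  assumes even: "(\<lambda>n. X (2 * n)) \<longlonglongrightarrow> L" and odd: "(\<lambda>n. X (2 * n + 1)) \<longlonglongrightarrow> L"
  shows "X \<longlonglongrightarrow> L"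
proof (rule LIMSEQ_I)
  fix r :: real assume "0 < r"
  obtain N1 where N1: "\<forall>n\<ge>N1. norm (X (2 * n) - L) < r"
    using LIMSEQ_D[OF even \<open>0 < r\<close>] by blast
  obtain N2 where N2: "\<forall>n\<ge>N2. norm (X (2 * n + 1) - L) < r"
    using LIMSEQ_D[OF odd \<open>0 < r\<close>] by blast
  have "norm (X n - L) < r" if "n \<ge> 2 * (N1 + N2)" for n
  proof (cases "even n")
    case True
    then obtain k where "n = 2 * k" by blast
    with that N1 show ?thesis by auto
  next
    case False
    then obtain k where "n = 2 * k + 1" using oddE by blast
    with that N2 show ?thesis by auto
  qed
  then show "\<exists>N. \<forall>n\<ge>N. norm (X n - L) < r"
    by blast
qed

locale decreasing_map =
  fixes f :: "real \<Rightarrow> real" and a tbar :: real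
  assumes lower_bound_pos: "0 < a"
    and lower_bound: "\<And>x. 0 < x \<Longrightarrow> a < f x"
    and antimono: "antimono_on {0<..} f"
    and cont: "continuous_on {0<..} f"
    and equilibrium: "is_equilibrium f tbar"
    \<comment> \<open>abstracts the hypothesis that \<open>G\<close> has no root of even multiplicity\<close>
    and sign_change: "\<And>r. 0 < r \<Longrightarrow> f (f r) = r \<Longrightarrow> f r \<noteq> r \<Longrightarrow>
                        sign_changes_at (\<lambda>x. f (f x) - x) r"
begin

abbreviation drift :: "real \<Rightarrow> real" where
  "drift x \<equiv> f (f x) - x"

abbreviation two_periodic_points :: "real set" where
  "two_periodic_points \<equiv> {x. 0 < x \<and> f (f x) = x}"

lemma f_pos: "0 < x \<Longrightarrow> 0 < f x"
  using lower_bound[of x] lower_bound_pos by linarith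

lemma f_antimonoD: "0 < x \<Longrightarrow> x \<le> y \<Longrightarrow> f y \<le> f x"
  by (rule monotone_onD[OF antimono]) auto

lemma mono_on_ff: "mono_on {0<..} (\<lambda>x. f (f x))"
  by (intro monotone_onI f_antimonoD) (auto intro: f_pos f_antimonoD)

lemma continuous_on_ff: "continuous_on {0<..} (\<lambda>x. f (f x))"
  by (rule continuous_on_compose2[OF cont cont]) (auto intro: f_pos)

lemma equilibrium_pos: "0 < tbar" and equilibrium_fixed: "f tbar = tbar"
  using equilibrium unfolding is_equilibrium_def by auto

lemma equilibrium_unique:
  assumes "0 < z" "f z = z"
  shows "z = tbar"
proof (rule ccontr)
  assume "z \<noteq> tbar"
  then consider "z < tbar" | "tbar < z" by linarith
  then show False
    using f_antimonoD[of z tbar] f_antimonoD[of tbar z] assms equilibrium_pos equilibrium_fixed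
    by cases auto
qed

lemma two_periodic_points_eq:
  "two_periodic_points = insert tbar (\<Union>(p, q)\<in>two_cycles f. {p, q})"
proof (intro equalityI subsetI)
  fix z assume z: "z \<in> two_periodic_points"
  show "z \<in> insert tbar (\<Union>(p, q)\<in>two_cycles f. {p, q})"
  proof (cases "z = tbar")
    case False
    then have "f z \<noteq> z"
      using equilibrium_unique z by auto
    then have "(min z (f z), max z (f z)) \<in> two_cycles f"
      using z f_pos[of z] by (auto simp: two_cycles_def is_two_cycle_def min_def max_def)
    then show ?thesis
      by (auto simp: min_def max_def split: if_splits)
  qed simp
qed (auto simp: two_cycles_def is_two_cycle_def equilibrium_pos equilibrium_fixed)

lemma drift_positive_near_zero:
  assumes "0 < p" "{0<..<p} \<inter> two_periodic_points = {}"
  shows "positive_on drift {0<..<p}"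
proof -
  define x where "x = min p a / 2"
  have x: "0 < x" "x < p" "x < a"
    unfolding x_def using assms(1) lower_bound_pos by auto
  then have "x < f (f x)"
    using lower_bound f_pos by (meson less_trans)
  moreover have "continuous_on {0<..<p} drift"
    by (intro continuous_intros continuous_on_subset[OF continuous_on_ff]) auto
  ultimately show ?thesis
    using assms(2) x by (intro positive_on_connected[of _ _ x]) auto
qed

lemma drift_negative_near_infinity:
  assumes "0 < q" "{q<..} \<inter> two_periodic_points = {}"
  shows "negative_on drift {q<..}"
proof -
  define y where "y = max q (f a) + 1"
  have y: "q < y" "f a < y"
    unfolding y_def by auto
  have "f (f y) \<le> f a"
    using f_antimonoD lower_bound lower_bound_pos assms(1) y(1) by (simp add: less_imp_le)
  then have "f (f y) < y"
    using y(2) by linarith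
  moreover have "continuous_on {q<..} drift"
    by (intro continuous_intros continuous_on_subset[OF continuous_on_ff]) (use assms(1) in auto)
  ultimately show ?thesis
    using assms y by (intro negative_on_connected[of _ _ y]) auto
qed

lemma drift_flips_at_two_cycle_point:
  assumes "0 \<le> l" "l < r" "r < m" "f (f r) = r" "f r \<noteq> r"
    and "({l<..<r} \<union> {r<..<m}) \<inter> two_periodic_points = {}"
  shows "(positive_on drift {l<..<r} \<longleftrightarrow> negative_on drift {r<..<m}) \<and>
         (negative_on drift {l<..<r} \<longleftrightarrow> positive_on drift {r<..<m})"
proof (rule sign_changes_at_flip)
  show "continuous_on ({l<..<r} \<union> {r<..<m}) drift"
    by (intro continuous_intros continuous_on_subset[OF continuous_on_ff]) (use assms(1,2) in auto)
qed (use assms sign_change in auto)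

lemma two_cycle_point: "(p, q) \<in> two_cycles f \<Longrightarrow> 0 < p \<and> p < q \<and> f p = q \<and> f q = p"
  unfolding two_cycles_def is_two_cycle_def by auto

context
  fixes t :: "nat \<Rightarrow> real"
  assumes solution: "is_solution f t"
begin

lemma solution_pos: "0 < t n"
  using solution f_pos unfolding is_solution_def by (induction n) auto

lemma solution_Suc: "t (Suc n) = f (t n)"
  using solution unfolding is_solution_def by simp

lemma solution_even: "t (2 * n) = ((\<lambda>x. f (f x)) ^^ n) (t 0)"
  by (induction n) (simp_all add: solution_Suc)

lemma solution_even_tendsto_attractor:
  assumes "0 \<le> v" "u \<in> {v<..<w}" "f (f u) = u"
    and "positive_on drift {v<..<u}" "negative_on drift {u<..<w}" "t 0 \<in> {v<..<w}"
  shows "(\<lambda>n. t (2 * n)) \<longlonglongrightarrow> u"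
  unfolding solution_even
  by (rule funpow_tendsto_attracting_fixed_point)
    (use assms in \<open>auto intro: mono_on_subset[OF mono_on_ff]
                                continuous_on_subset[OF continuous_on_ff]\<close>)

lemma solution_even_constant:
  assumes "f (f (t 0)) = t 0"
  shows "(\<lambda>n. t (2 * n)) \<longlonglongrightarrow> t 0"
proof -
  have "((\<lambda>x. f (f x)) ^^ n) (t 0) = t 0" for n
    by (induction n) (simp_all add: assms)
  then show ?thesis
    by (simp add: solution_even)
qed

lemma solution_odd_tendsto:
  assumes "(\<lambda>n. t (2 * n)) \<longlonglongrightarrow> u" "0 < u"
  shows "(\<lambda>n. t (2 * n + 1)) \<longlonglongrightarrow> f u"
proof -
  have "(\<lambda>n. f (t (2 * n))) \<longlonglongrightarrow> f u"
    using continuous_on_tendsto_compose[OF cont assms(1)] assms(2) solution_pos by simp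
  then show ?thesis
    using solution_Suc by simp
qed

lemma solution_tendsto_equilibrium:
  "(\<lambda>n. t (2 * n)) \<longlonglongrightarrow> tbar \<Longrightarrow> t \<longlonglongrightarrow> tbar"
  using solution_odd_tendsto[of tbar] equilibrium_pos equilibrium_fixed by (auto intro: LIMSEQ_even_odd)

lemma solution_converges_to_cycle:
  assumes "(p, q) \<in> two_cycles f" "(\<lambda>n. t (2 * n)) \<longlonglongrightarrow> p \<or> (\<lambda>n. t (2 * n)) \<longlonglongrightarrow> q"
  shows "converges_to_cycle t p q"
  using assms two_cycle_point[OF assms(1)] solution_odd_tendsto[of p] solution_odd_tendsto[of q]
  unfolding converges_to_cycle_def by auto

lemma solution_tendsto_equilibrium_from_equilibrium: "t 0 = tbar \<Longrightarrow> t \<longlonglongrightarrow> tbar"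
  using solution_even_constant equilibrium_fixed solution_tendsto_equilibrium by simp

lemma solution_converges_to_cycle_from_cycle_point:
  assumes cycle: "(p, q) \<in> two_cycles f" and "t 0 \<in> {p, q}"
  shows "converges_to_cycle t p q"
proof -
  have "f (f (t 0)) = t 0"
    using two_cycle_point[OF cycle] assms(2) by auto
  then show ?thesis
    using solution_even_constant solution_converges_to_cycle[OF cycle] assms(2) by auto
qed

lemma solution_tendsto_equilibrium_of_basin:
  assumes "positive_on drift {l<..<tbar}" "negative_on drift {tbar<..<w}"
    and "0 \<le> l" "l < tbar" "tbar < w" "t 0 \<in> {l<..<w}"
  shows "t \<longlonglongrightarrow> tbar"
  using solution_even_tendsto_attractor[of l tbar w] assms equilibrium_fixed
  by (auto intro: solution_tendsto_equilibrium)

lemma solution_converges_to_cycle_of_basin: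
  assumes cycle: "(p, q) \<in> two_cycles f"
    and "positive_on drift {l<..<p}" "negative_on drift {p<..<p'}"
    and "positive_on drift {q'<..<q}" "negative_on drift {q<..<w}"
    and "0 \<le> l" "l < p" "p < p'" "p' \<le> q'" "q' < q" "q < w"
    and start: "t 0 \<in> {l<..<p'} \<union> {q'<..<w}"
  shows "converges_to_cycle t p q"
proof -
  from start have "(\<lambda>n. t (2 * n)) \<longlonglongrightarrow> p \<or> (\<lambda>n. t (2 * n)) \<longlonglongrightarrow> q"
    using two_cycle_point[OF cycle] assms(2-11)
      solution_even_tendsto_attractor[of l p p'] solution_even_tendsto_attractor[of q' q w]
    by auto
  then show ?thesis
    by (rule solution_converges_to_cycle[OF cycle])
qed

lemma converges_if_no_two_cycle:
  assumes "two_cycles f = {}"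
  shows "t \<longlonglongrightarrow> tbar"
proof -
  have periodic: "two_periodic_points = {tbar}"
    using two_periodic_points_eq assms by simp
  have "positive_on drift {0<..<tbar}"
    using periodic equilibrium_pos by (intro drift_positive_near_zero) auto
  moreover have "negative_on drift {tbar<..}"
    using periodic equilibrium_pos by (intro drift_negative_near_infinity) auto
  then have "negative_on drift {tbar<..<t 0 + tbar}"
    by (rule negative_on_subset) auto
  ultimately show ?thesis
    using equilibrium_pos solution_pos[of 0] by (intro solution_tendsto_equilibrium_of_basin) auto
qed

lemma converges_if_one_two_cycle:
  assumes cycles: "two_cycles f = {(p, q)}" and order: "p < tbar" "tbar < q"
  shows "(t 0 \<noteq> tbar \<longrightarrow> converges_to_cycle t p q) \<and> (t 0 = tbar \<longrightarrow> t \<longlonglongrightarrow> tbar)"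
proof -
  have cycle: "(p, q) \<in> two_cycles f"
    using cycles by simp
  note pq = two_cycle_point[OF cycle]
  have periodic: "two_periodic_points = {tbar, p, q}"
    using two_periodic_points_eq cycles by auto
  have P0: "positive_on drift {0<..<p}"
    using periodic pq order by (intro drift_positive_near_zero) auto
  then have N1: "negative_on drift {p<..<tbar}"
    using drift_flips_at_two_cycle_point[of 0 p tbar] periodic pq order by auto
  have N3: "negative_on drift {q<..}"
    using periodic pq order by (intro drift_negative_near_infinity) auto
  then have "negative_on drift {q<..<q + 1}"
    by (rule negative_on_subset) auto
  then have P2: "positive_on drift {tbar<..<q}"
    using drift_flips_at_two_cycle_point[of tbar q "q + 1"] periodic pq order equilibrium_pos by auto
  have N3': "negative_on drift {q<..<t 0 + q}"
    using N3 by (rule negative_on_subset) auto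
  show ?thesis
  proof (intro conjI impI)
    assume "t 0 \<noteq> tbar"
    then show "converges_to_cycle t p q"
      using pq order solution_pos[of 0]
      by (intro solution_converges_to_cycle_of_basin[OF cycle P0 N1 P2 N3']) auto
  qed (rule solution_tendsto_equilibrium_from_equilibrium)
qed

lemma converges_if_two_two_cycles:
  assumes cycles: "two_cycles f = {(p1, q1), (p2, q2)}"
    and order: "p1 < p2" "p2 < tbar" "tbar < q2" "q2 < q1"
  shows "(t 0 \<in> {p2<..<q2} \<longrightarrow> t \<longlonglongrightarrow> tbar) \<and>
         (t 0 \<in> {p2, q2} \<longrightarrow> converges_to_cycle t p2 q2) \<and>
         (t 0 \<notin> {p2..q2} \<longrightarrow> converges_to_cycle t p1 q1)"
proof -
  have cycle1: "(p1, q1) \<in> two_cycles f" and cycle2: "(p2, q2) \<in> two_cycles f"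
    using cycles by simp_all
  note pq1 = two_cycle_point[OF cycle1] and pq2 = two_cycle_point[OF cycle2]
  have periodic: "two_periodic_points = {tbar, p1, q1, p2, q2}"
    using two_periodic_points_eq cycles by auto
  have P0: "positive_on drift {0<..<p1}"
    using periodic pq1 order by (intro drift_positive_near_zero) auto
  then have N1: "negative_on drift {p1<..<p2}"
    using drift_flips_at_two_cycle_point[of 0 p1 p2] periodic pq1 order by auto
  then have P2: "positive_on drift {p2<..<tbar}"
    using drift_flips_at_two_cycle_point[of p1 p2 tbar] periodic pq1 pq2 order by auto
  have N5: "negative_on drift {q1<..}"
    using periodic pq1 order by (intro drift_negative_near_infinity) auto
  then have "negative_on drift {q1<..<q1 + 1}"
    by (rule negative_on_subset) auto
  then have P4: "positive_on drift {q2<..<q1}"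
    using drift_flips_at_two_cycle_point[of q2 q1 "q1 + 1"] periodic pq1 pq2 order by auto
  then have N3: "negative_on drift {tbar<..<q2}"
    using drift_flips_at_two_cycle_point[of tbar q2 q1] periodic pq2 order equilibrium_pos by auto
  have N5': "negative_on drift {q1<..<t 0 + q1}"
    using N5 by (rule negative_on_subset) auto
  show ?thesis
  proof (intro conjI impI)
    assume "t 0 \<in> {p2<..<q2}"
    then show "t \<longlonglongrightarrow> tbar"
      using P2 N3 pq2 order by (intro solution_tendsto_equilibrium_of_basin) auto
  next
    assume "t 0 \<in> {p2, q2}"
    then show "converges_to_cycle t p2 q2"
      by (rule solution_converges_to_cycle_from_cycle_point[OF cycle2])
  next
    assume "t 0 \<notin> {p2..q2}"
    then show "converges_to_cycle t p1 q1"
      using pq1 pq2 order solution_pos[of 0]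
      by (intro solution_converges_to_cycle_of_basin[OF cycle1 P0 N1 P4 N5']) auto
  qed
qed

lemma converges_if_three_two_cycles:
  assumes cycles: "two_cycles f = {(p1, q1), (p2, q2), (p3, q3)}"
    and order: "p1 < p2" "p2 < p3" "p3 < tbar" "tbar < q3" "q3 < q2" "q2 < q1"
  shows "(t 0 \<in> {p2<..<q2} - {tbar} \<longrightarrow> converges_to_cycle t p3 q3) \<and>
         (t 0 = tbar \<longrightarrow> t \<longlonglongrightarrow> tbar) \<and>
         (t 0 \<in> {p2, q2} \<longrightarrow> converges_to_cycle t p2 q2) \<and>
         (t 0 \<notin> {p2..q2} \<longrightarrow> converges_to_cycle t p1 q1)"
proof -
  have cycle1: "(p1, q1) \<in> two_cycles f" and cycle2: "(p2, q2) \<in> two_cycles f"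
    and cycle3: "(p3, q3) \<in> two_cycles f"
    using cycles by simp_all
  note pq1 = two_cycle_point[OF cycle1] and pq2 = two_cycle_point[OF cycle2]
    and pq3 = two_cycle_point[OF cycle3]
  have periodic: "two_periodic_points = {tbar, p1, q1, p2, q2, p3, q3}"
    using two_periodic_points_eq cycles by auto
  have P0: "positive_on drift {0<..<p1}"
    using periodic pq1 order by (intro drift_positive_near_zero) auto
  then have N1: "negative_on drift {p1<..<p2}"
    using drift_flips_at_two_cycle_point[of 0 p1 p2] periodic pq1 order by auto
  then have P2: "positive_on drift {p2<..<p3}"
    using drift_flips_at_two_cycle_point[of p1 p2 p3] periodic pq1 pq2 order by auto
  then have N3: "negative_on drift {p3<..<tbar}"
    using drift_flips_at_two_cycle_point[of p2 p3 tbar] periodic pq1 pq3 order by auto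
  have N7: "negative_on drift {q1<..}"
    using periodic pq1 order by (intro drift_negative_near_infinity) auto
  then have "negative_on drift {q1<..<q1 + 1}"
    by (rule negative_on_subset) auto
  then have P6: "positive_on drift {q2<..<q1}"
    using drift_flips_at_two_cycle_point[of q2 q1 "q1 + 1"] periodic pq1 pq2 order by auto
  then have N5: "negative_on drift {q3<..<q2}"
    using drift_flips_at_two_cycle_point[of q3 q2 q1] periodic pq2 pq3 order by auto
  then have P4: "positive_on drift {tbar<..<q3}"
    using drift_flips_at_two_cycle_point[of tbar q3 q2] periodic pq3 order equilibrium_pos by auto
  have N7': "negative_on drift {q1<..<t 0 + q1}"
    using N7 by (rule negative_on_subset) auto
  show ?thesis
  proof (intro conjI impI)
    assume "t 0 \<in> {p2<..<q2} - {tbar}"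
    then show "converges_to_cycle t p3 q3"
      using pq2 pq3 order
      by (intro solution_converges_to_cycle_of_basin[OF cycle3 P2 N3 P4 N5]) auto
  next
    assume "t 0 = tbar"
    then show "t \<longlonglongrightarrow> tbar"
      by (rule solution_tendsto_equilibrium_from_equilibrium)
  next
    assume "t 0 \<in> {p2, q2}"
    then show "converges_to_cycle t p2 q2"
      by (rule solution_converges_to_cycle_from_cycle_point[OF cycle2])
  next
    assume "t 0 \<notin> {p2..q2}"
    then show "converges_to_cycle t p1 q1"
      using pq1 pq2 order solution_pos[of 0]
      by (intro solution_converges_to_cycle_of_basin[OF cycle1 P0 N1 P6 N7']) auto
  qed
qed

end

end

lemma quadratic_pos:
  fixes b c d x :: real
  assumes "0 < b" "0 < d" "- sqrt (3 * b * d) \<le> c" "0 < x"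
  shows "0 < b * x^2 + c * x + d"
proof -
  define s where "s = sqrt (3 * b * d)"
  have "s^2 = 3 * b * d"
    using assms(1,2) by (simp add: s_def)
  then have "4 * b * (b * x^2 - s * x + d) = (2 * b * x - s)^2 + b * d"
    by (simp add: power2_eq_square algebra_simps)
  also have "\<dots> > 0"
    using assms(1,2) by (simp add: add_nonneg_pos)
  finally have "0 < b * x^2 - s * x + d"
    using assms(1) by (simp add: zero_less_mult_iff)
  moreover have "- s * x \<le> c * x"
    using mult_right_mono[OF assms(3), of x] assms(4) unfolding s_def by simp
  ultimately show ?thesis
    by linarith
qed

text \<open>
  In \<open>u = 1 / x\<close>, \<open>\<phi>\<close> is the cubic \<open>a + b u + c u\<^sup>2 + d u\<^sup>3\<close>, whose increment between \<open>v\<close> and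
  \<open>u\<close> is \<open>u - v\<close> times the expression below; the bound on \<open>c\<close> is sharp for it (take \<open>u = v\<close>).
\<close>

lemma cubic_difference_quotient_nonneg:
  fixes b c d u v :: real
  assumes "0 < b" "0 < d" "- sqrt (3 * b * d) \<le> c" "0 < u" "0 < v"
  shows "0 \<le> b + c * (u + v) + d * (u^2 + u * v + v^2)"
proof -
  define s where "s = sqrt (3 * b * d)"
  define w where "w = u + v"
  have "s^2 = 3 * b * d"
    using assms(1,2) by (simp add: s_def)
  then have "12 * d * (b - s * w + 3 / 4 * d * w^2) = (3 * d * w - 2 * s)^2"
    by (simp add: power2_eq_square algebra_simps)
  then have "0 \<le> b - s * w + 3 / 4 * d * w^2"
    using assms(2) by (metis zero_le_power2 zero_le_mult_iff mult_pos_pos zero_less_numeral not_le)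
  moreover have "- s * w \<le> c * w"
    using mult_right_mono[OF assms(3), of w] assms(4,5) unfolding s_def w_def by simp
  moreover have "3 / 4 * w^2 \<le> u^2 + u * v + v^2"
    using zero_le_power2[of "u - v"] unfolding w_def by (simp add: power2_eq_square algebra_simps)
  then have "3 / 4 * d * w^2 \<le> d * (u^2 + u * v + v^2)"
    using assms(2) by (metis mult.assoc mult.commute mult_left_mono less_imp_le)
  ultimately show ?thesis
    unfolding w_def by linarith
qed

lemma phi_reciprocal: "0 < x \<Longrightarrow> phi a b c d x = a + b * (1/x) + c * (1/x)^2 + d * (1/x)^3"
  unfolding phi_def by (simp add: field_simps power2_eq_square power3_eq_cube)

lemma phi_antimono:
  fixes a b c d :: real
  assumes "0 < b" "0 < d" "- sqrt (3 * b * d) \<le> c"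
  shows "antimono_on {0<..} (phi a b c d)"
proof (rule monotone_onI)
  fix x y :: real
  assume "x \<in> {0<..}" "y \<in> {0<..}" "x \<le> y"
  define u v where "u = 1 / x" and "v = 1 / y"
  have "0 < u" "0 < v" "v \<le> u"
    unfolding u_def v_def using \<open>x \<in> {0<..}\<close> \<open>y \<in> {0<..}\<close> \<open>x \<le> y\<close> by (auto simp: frac_le)
  then have "0 \<le> (u - v) * (b + c * (u + v) + d * (u^2 + u * v + v^2))"
    using cubic_difference_quotient_nonneg[OF assms] by simp
  also have "\<dots> = phi a b c d x - phi a b c d y"
    using phi_reciprocal \<open>x \<in> {0<..}\<close> \<open>y \<in> {0<..}\<close> unfolding u_def v_def
    by (simp add: power2_eq_square power3_eq_cube algebra_simps)
  finally show "phi a b c d y \<le> phi a b c d x"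
    by simp
qed

lemma phi_gt:
  fixes a b c d x :: real
  assumes "0 < b" "0 < d" "- sqrt (3 * b * d) \<le> c" "0 < x"
  shows "a < phi a b c d x"
proof -
  have "phi a b c d x = a + (b * x^2 + c * x + d) / x^3"
    unfolding phi_def using assms(4) by (simp add: field_simps power2_eq_square power3_eq_cube)
  then show ?thesis
    using quadratic_pos[OF assms] assms(4) by simp
qed

lemma continuous_on_phi: "continuous_on {0<..} (phi a b c d)"
  unfolding phi_def by (intro continuous_intros) auto

lemma G_poly_nonzero: "0 < a \<Longrightarrow> G_poly a b c d \<noteq> 0"
  by (metis G_poly_def pCons_eq_0_iff zero_less_power less_irrefl)

lemma phi_phi_minus_id:
  fixes a b c d x :: real
  defines "N \<equiv> a * x^3 + b * x^2 + c * x + d"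
  assumes "0 < x" "0 < N"
  shows "phi a b c d (phi a b c d x) - x = poly (G_poly a b c d) x * (- (x^4 - N) / N^3)"
proof -
  have "(phi a b c d (phi a b c d x) - x) * N^3
      = (a - x) * N^3 + b * N^2 * x^3 + c * N * x^6 + d * x^9"
    using assms(2,3) unfolding phi_def N_def[symmetric] by (simp add: field_simps)
  also have "\<dots> = - ((x^4 - N) * poly (G_poly a b c d) x)"
    unfolding N_def G_poly_def by simp algebra
  finally show ?thesis
    using assms(3) by (simp add: field_simps)
qed

lemma phi_sign_changes_at_two_periodic_point:
  fixes a b c d r :: real
  assumes a: "0 < a" and b: "0 < b" and d: "0 < d" and c: "- sqrt (3 * b * d) \<le> c"
    and odd_roots: "\<forall>x. poly (G_poly a b c d) x = 0 \<longrightarrow> odd (order x (G_poly a b c d))"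
    and r: "0 < r" "phi a b c d (phi a b c d r) = r" "phi a b c d r \<noteq> r"
  shows "sign_changes_at (\<lambda>x. phi a b c d (phi a b c d x) - x) r"
proof -
  define N where "N x = a * x^3 + b * x^2 + c * x + d" for x
  define h where "h x = - (x^4 - N x) / N x ^ 3" for x
  have N_pos: "0 < N x" if "0 < x" for x
  proof -
    have "0 < a * x^3"
      using a that by simp
    then show ?thesis
      using quadratic_pos[OF b d c that] unfolding N_def by linarith
  qed
  have drift: "phi a b c d (phi a b c d x) - x = poly (G_poly a b c d) x * h x" if "0 < x" for x
    using phi_phi_minus_id[of x a b c d] N_pos[OF that] that unfolding h_def N_def by simp
  have "r^4 \<noteq> N r"
  proof
    assume "r^4 = N r"
    then have "phi a b c d r = r^4 / r^3"
      by (simp add: phi_def N_def)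
    also have "\<dots> = r"
      using r(1) by (simp add: field_simps eval_nat_numeral)
    finally show False
      using r(3) by contradiction
  qed
  then have "h r \<noteq> 0"
    using N_pos[OF r(1)] unfolding h_def by simp
  moreover have "poly (G_poly a b c d) r = 0"
    using drift[OF r(1)] r(2) \<open>h r \<noteq> 0\<close> by simp
  moreover have "isCont h r"
    using N_pos[OF r(1)] unfolding h_def N_def by (intro continuous_intros) auto
  ultimately have "sign_changes_at (\<lambda>x. poly (G_poly a b c d) x * h x) r"
    using odd_roots G_poly_nonzero[OF a] by (intro sign_changes_at_odd_order_root) auto
  have "eventually (\<lambda>x. 0 < x) (at r)"
    using r(1) by (rule order_tendstoD(1)[OF tendsto_ident_at])
  then have "eventually (\<lambda>x. phi a b c d (phi a b c d x) - x = poly (G_poly a b c d) x * h x) (at r)"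
    by (rule eventually_mono) (rule drift)
  then show ?thesis
    by (rule sign_changes_at_cong) fact
qed

theorem theorem4:
  fixes a b c d tbar :: real and t :: "nat \<Rightarrow> real"
  assumes "a > 0" and "b > 0" and "d > 0"
    and "c \<ge> - sqrt (3 * b * d)"
    and "is_equilibrium (phi a b c d) tbar"
    and "is_solution (phi a b c d) t"
    and "\<forall>x::real. poly (G_poly a b c d) x = 0 \<longrightarrow> odd (order x (G_poly a b c d))"
  shows
    "(two_cycles (phi a b c d) = {} \<longrightarrow> t \<longlonglongrightarrow> tbar)
   \<and> (\<forall>p q. two_cycles (phi a b c d) = {(p, q)} \<and> p < tbar \<and> tbar < q \<longrightarrow>
         (t 0 \<noteq> tbar \<longrightarrow> converges_to_cycle t p q) \<and> (t 0 = tbar \<longrightarrow> t \<longlonglongrightarrow> tbar))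
   \<and> (\<forall>p1 q1 p2 q2. two_cycles (phi a b c d) = {(p1, q1), (p2, q2)} \<and>
         p1 < p2 \<and> p2 < tbar \<and> tbar < q2 \<and> q2 < q1 \<longrightarrow>
         (t 0 \<in> {p2<..<q2} \<longrightarrow> t \<longlonglongrightarrow> tbar) \<and>
         (t 0 \<in> {p2, q2} \<longrightarrow> converges_to_cycle t p2 q2) \<and>
         (t 0 \<notin> {p2..q2} \<longrightarrow> converges_to_cycle t p1 q1))
   \<and> (\<forall>p1 q1 p2 q2 p3 q3. two_cycles (phi a b c d) = {(p1, q1), (p2, q2), (p3, q3)} \<and>
         p1 < p2 \<and> p2 < p3 \<and> p3 < tbar \<and> tbar < q3 \<and> q3 < q2 \<and> q2 < q1 \<longrightarrow>
         (t 0 \<in> {p2<..<q2} - {tbar} \<longrightarrow> converges_to_cycle t p3 q3) \<and>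
         (t 0 = tbar \<longrightarrow> t \<longlonglongrightarrow> tbar) \<and>
         (t 0 \<in> {p2, q2} \<longrightarrow> converges_to_cycle t p2 q2) \<and>
         (t 0 \<notin> {p2..q2} \<longrightarrow> converges_to_cycle t p1 q1))"
proof -
  interpret decreasing_map "phi a b c d" a tbar
  proof
    show "a < phi a b c d x" if "0 < x" for x
      using phi_gt[OF assms(2-4) that] .
    show "antimono_on {0<..} (phi a b c d)"
      using phi_antimono[OF assms(2-4)] .
    show "sign_changes_at (\<lambda>x. phi a b c d (phi a b c d x) - x) r"
      if "0 < r" "phi a b c d (phi a b c d r) = r" "phi a b c d r \<noteq> r" for r
      using phi_sign_changes_at_two_periodic_point[OF assms(1-4,7) that] .
  qed (use assms(1,5) continuous_on_phi in auto)
  show ?thesis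
    using converges_if_no_two_cycle[OF assms(6)] converges_if_one_two_cycle[OF assms(6)]
      converges_if_two_two_cycles[OF assms(6)] converges_if_three_two_cycles[OF assms(6)]
    by blast
qed

end
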